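(* Let $K\subset\mathbb{C}$ be a finite Galois extension of $\mathbb{Q}$ of degree $n$, with Galois group $G=\{\sigma_1,\dots,\sigma_n\}$, ring of integers $O_K$ and discriminant $D_K$. Let $\beta\in O_K$ be such that $(\sigma_1(\beta),\dots,\sigma_n(\beta))$ is a $\mathbb{Q}$-basis of $K$. Then $|\sigma_1(\beta)|^2+\cdots+|\sigma_n(\beta)|^2\geqslant|D_K|^{1/n}$. *)

theory Defs
  imports Complex_Main "HOL-Computational_Algebra.Polynomial" "Jordan_Normal_Form.Determinant"
begin

definition subfield_C :: "complex set \<Rightarrow> bool" where
  "subfield_C K \<longleftrightarrow> 0 \<in> K \<and> 1 \<in> K \<and>
     (\<forall>x\<in>K. \<forall>y\<in>K. x + y \<in> K \<and> x - y \<in> K \<and> x * y \<in> K) \<and>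
     (\<forall>x\<in>K. x \<noteq> 0 \<longrightarrow> inverse x \<in> K)"

definition q_indep :: "complex list \<Rightarrow> bool" where
  "q_indep b \<longleftrightarrow> (\<forall>c :: nat \<Rightarrow> rat.
     (\<Sum>i<length b. of_rat (c i) * b ! i) = 0 \<longrightarrow> (\<forall>i<length b. c i = 0))"

definition q_basis :: "complex set \<Rightarrow> complex list \<Rightarrow> bool" where
  "q_basis K b \<longleftrightarrow> set b \<subseteq> K \<and> q_indep b \<and>
     (\<forall>x\<in>K. \<exists>c :: nat \<Rightarrow> rat. x = (\<Sum>i<length b. of_rat (c i) * b ! i))"

definition number_field :: "complex set \<Rightarrow> bool" where
  "number_field K \<longleftrightarrow> subfield_C K \<and> (\<exists>b. q_basis K b)"

definition degree_Q :: "complex set \<Rightarrow> nat" where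
  "degree_Q K = length (SOME b. q_basis K b)"

definition coord :: "complex list \<Rightarrow> complex \<Rightarrow> nat \<Rightarrow> rat" where
  "coord b x = (THE c. (\<forall>i. length b \<le> i \<longrightarrow> c i = 0) \<and>
                       x = (\<Sum>i<length b. of_rat (c i) * b ! i))"

text \<open>Trace Tr_{K/Q}(x): trace of the Q-linear map y \<mapsto> x*y on K.\<close>
definition trace_Q :: "complex set \<Rightarrow> complex \<Rightarrow> rat" where
  "trace_Q K x = (let b = (SOME b. q_basis K b) in
      \<Sum>j<length b. coord b (x * b ! j) j)"

definition gal :: "complex set \<Rightarrow> (complex \<Rightarrow> complex) set" where
  "gal K = {\<sigma>. bij_betw \<sigma> K K \<and> \<sigma> 1 = 1 \<and>
     (\<forall>x\<in>K. \<forall>y\<in>K. \<sigma> (x + y) = \<sigma> x + \<sigma> y \<and> \<sigma> (x * y) = \<sigma> x * \<sigma> y) \<and>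
     (\<forall>x. x \<notin> K \<longrightarrow> \<sigma> x = x)}"

definition galois :: "complex set \<Rightarrow> bool" where
  "galois K \<longleftrightarrow> finite (gal K) \<and> card (gal K) = degree_Q K"

definition ring_of_integers :: "complex set \<Rightarrow> complex set" where
  "ring_of_integers K = {x \<in> K. algebraic_int x}"

definition integral_basis :: "complex set \<Rightarrow> complex list \<Rightarrow> bool" where
  "integral_basis K w \<longleftrightarrow> set w \<subseteq> ring_of_integers K \<and> q_indep w \<and>
     (\<forall>x\<in>ring_of_integers K. \<exists>c :: nat \<Rightarrow> int. x = (\<Sum>i<length w. of_int (c i) * w ! i))"

definition disc :: "complex set \<Rightarrow> rat" where
  "disc K = (let w = (SOME w. integral_basis K w) in
     det (mat (length w) (length w) (\<lambda>(i, j). trace_Q K (w ! i * w ! j))))"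

end

theory Submission
  imports Defs "Jordan_Normal_Form.Char_Poly"
begin

text \<open>
  Put \<open>b\<^sub>j = \<sigma>\<^sub>j(\<beta>)\<close> and \<open>W = (\<sigma>\<^sub>i(b\<^sub>j))\<^sub>i\<^sub>j\<close>. The entry \<open>W\<^sub>i\<^sub>j = (\<sigma>\<^sub>i \<circ> \<sigma>\<^sub>j)(\<beta>)\<close>, and
  composition with \<open>\<sigma>\<^sub>j\<close> permutes the Galois group, so every column of \<open>W\<close> has squared length
  \<open>S = \<Sum>\<^sub>i |\<sigma>\<^sub>i(\<beta>)|\<^sup>2\<close> and Hadamard's inequality gives \<open>|det W|\<^sup>2 \<le> S\<^sup>n\<close>.
  On the other hand, for any \<open>\<rat>\<close>-basis \<open>w\<close> of \<open>K\<close> the trace formula \<open>Tr = \<Sum>\<^sub>i \<sigma>\<^sub>i\<close> gives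
  \<open>det (Tr (w\<^sub>i w\<^sub>j)) = det (\<sigma>\<^sub>i(w\<^sub>j))\<^sup>2\<close>, an integer when \<open>w \<subseteq> O\<^sub>K\<close>. Writing the basis \<open>b \<subseteq> O\<^sub>K\<close> in
  terms of an integral basis \<open>w\<close> by an integer matrix \<open>A\<close> with \<open>det A \<noteq> 0\<close> yields
  \<open>|D\<^sub>K| = |det (\<sigma>\<^sub>i(w\<^sub>j))|\<^sup>2 \<le> |det W|\<^sup>2\<close>. An integral basis exists because a \<open>\<rat>\<close>-basis in \<open>O\<^sub>K\<close>
  that is not integral can be modified to make the positive integer \<open>|det (\<sigma>\<^sub>i(w\<^sub>j))|\<^sup>2\<close> smaller.
\<close>

section \<open>Hadamard's inequality\<close>

definition cinner :: "nat \<Rightarrow> (nat \<Rightarrow> complex) \<Rightarrow> (nat \<Rightarrow> complex) \<Rightarrow> complex" where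
  "cinner n u v = (\<Sum>i<n. u i * cnj (v i))"

definition sqnorm :: "nat \<Rightarrow> (nat \<Rightarrow> complex) \<Rightarrow> real" where
  "sqnorm n u = (\<Sum>i<n. (cmod (u i))\<^sup>2)"

lemma cinner_commute: "cinner n v u = cnj (cinner n u v)"
  by (simp add: cinner_def mult.commute)

lemma cinner_self: "cinner n u u = of_real (sqnorm n u)"
  unfolding cinner_def sqnorm_def of_real_sum by (rule sum.cong) (simp_all only: complex_norm_square)

lemma sqnorm_nonneg: "sqnorm n u \<ge> 0"
  by (simp add: sqnorm_def sum_nonneg)

lemma cinner_self_eq_0:
  assumes "cinner n u u = 0" "i < n"
  shows "u i = 0"
proof -
  have "sqnorm n u = 0" using assms(1) by (simp add: cinner_self)
  then show ?thesis using assms(2) by (simp add: sqnorm_def sum_nonneg_eq_0_iff)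
qed

lemma cinner_diff_sum:
  "cinner n (\<lambda>i. u i - (\<Sum>l\<in>L. c l * v l i)) w = cinner n u w - (\<Sum>l\<in>L. c l * cinner n (v l) w)"
  by (simp add: cinner_def algebra_simps sum_subtractf sum_distrib_left sum_distrib_right sum.swap[of _ L])

text \<open>The vectors \<open>a j\<close> need not be independent: if \<open>gram_schmidt n a l\<close> vanishes, its
  coefficient is \<open>_ / 0 = 0\<close>, so it contributes nothing.\<close>

function gram_schmidt :: "nat \<Rightarrow> (nat \<Rightarrow> nat \<Rightarrow> complex) \<Rightarrow> nat \<Rightarrow> nat \<Rightarrow> complex" where
  "gram_schmidt n a j = (\<lambda>i. a j i - (\<Sum>l<j.
     cinner n (a j) (gram_schmidt n a l) / cinner n (gram_schmidt n a l) (gram_schmidt n a l)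
       * gram_schmidt n a l i))"
  by auto
termination by (relation "measure (\<lambda>(n, a, j). j)") auto

declare gram_schmidt.simps [simp del]

definition gs_coeff :: "nat \<Rightarrow> (nat \<Rightarrow> nat \<Rightarrow> complex) \<Rightarrow> nat \<Rightarrow> nat \<Rightarrow> complex" where
  "gs_coeff n a j l =
     cinner n (a j) (gram_schmidt n a l) / cinner n (gram_schmidt n a l) (gram_schmidt n a l)"

lemma gram_schmidt_eq:
  "gram_schmidt n a j = (\<lambda>i. a j i - (\<Sum>l<j. gs_coeff n a j l * gram_schmidt n a l i))"
  by (subst gram_schmidt.simps) (simp add: gs_coeff_def)

lemma gram_schmidt_decomp: "a j i = gram_schmidt n a j i + (\<Sum>l<j. gs_coeff n a j l * gram_schmidt n a l i)"
  using fun_cong[OF gram_schmidt_eq[of n a j], of i] by simp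

lemma gram_schmidt_orthogonal: "m < j \<Longrightarrow> cinner n (gram_schmidt n a j) (gram_schmidt n a m) = 0"
proof (induction j arbitrary: m rule: less_induct)
  case (less j)
  let ?u = "gram_schmidt n a"
  have orth: "cinner n (?u l) (?u m) = 0" if "l < j" "l \<noteq> m" for l
    using less.IH less.prems that cinner_commute[of n "?u l" "?u m"]
    by (cases "m < l") (auto simp: less.IH)
  have "cinner n (?u j) (?u m) = cinner n (a j) (?u m) - (\<Sum>l<j. gs_coeff n a j l * cinner n (?u l) (?u m))"
    by (subst gram_schmidt_eq) (rule cinner_diff_sum)
  also have "(\<Sum>l<j. gs_coeff n a j l * cinner n (?u l) (?u m)) = gs_coeff n a j m * cinner n (?u m) (?u m)"
    using less.prems orth by (subst sum.remove[of _ m]) (auto intro!: sum.neutral)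
  also have "cinner n (a j) (?u m) - gs_coeff n a j m * cinner n (?u m) (?u m) = 0"
  proof (cases "cinner n (?u m) (?u m) = 0")
    case True
    then show ?thesis using cinner_self_eq_0[OF True] by (simp add: cinner_def)
  next
    case False
    then show ?thesis by (simp add: gs_coeff_def)
  qed
  finally show ?case .
qed

lemma sqnorm_gram_schmidt_le: "sqnorm n (gram_schmidt n a j) \<le> sqnorm n (a j)"
proof -
  let ?u = "gram_schmidt n a"
  define v where "v i = (\<Sum>l<j. gs_coeff n a j l * ?u l i)" for i
  have aj: "a j = (\<lambda>i. ?u j i + v i)" unfolding v_def by (rule ext) (rule gram_schmidt_decomp)
  have "cinner n (?u j) v = (\<Sum>l<j. cnj (gs_coeff n a j l) * cinner n (?u j) (?u l))"
    by (simp add: cinner_def v_def sum_distrib_left sum_distrib_right sum.swap[of _ "{..<j}"] algebra_simps)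
  also have "\<dots> = 0" by (simp add: gram_schmidt_orthogonal)
  finally have uv: "cinner n (?u j) v = 0" .
  then have vu: "cinner n v (?u j) = 0" using cinner_commute[of n v "?u j"] by simp
  have "cinner n (a j) (a j) = cinner n (?u j) (?u j) + cinner n (?u j) v + cinner n v (?u j) + cinner n v v"
    by (subst aj)+ (simp add: cinner_def algebra_simps sum.distrib)
  then have "sqnorm n (a j) = sqnorm n (?u j) + sqnorm n v"
    using uv vu by (simp add: cinner_self flip: of_real_add)
  then show ?thesis using sqnorm_nonneg[of n v] by simp
qed

lemma det_gram_schmidt_mat:
  fixes A :: "complex mat"
  assumes A: "A \<in> carrier_mat n n"
  shows "det (mat n n (\<lambda>(i, j). gram_schmidt n (\<lambda>j i. A $$ (i, j)) j i)) = det A"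
proof -
  define a where "a j i = A $$ (i, j)" for j i
  let ?u = "gram_schmidt n a"
  define U where "U = mat n n (\<lambda>(i, j). ?u j i)"
  define T where "T = mat n n (\<lambda>(l, j). if l = j then 1 else if l < j then gs_coeff n a j l else 0)"
  have U: "U \<in> carrier_mat n n" and T: "T \<in> carrier_mat n n" unfolding U_def T_def by auto
  have "A = U * T"
  proof (rule eq_matI)
    fix i j assume "i < dim_row (U * T)" "j < dim_col (U * T)"
    then have i: "i < n" and j: "j < n" by (auto simp: U_def T_def)
    have "(U * T) $$ (i, j) = (\<Sum>l<n. ?u l i * T $$ (l, j))"
      using i j by (simp add: U_def T_def scalar_prod_def atLeast0LessThan)
    also have "\<dots> = (\<Sum>l\<in>{j} \<union> {..<j}. ?u l i * T $$ (l, j))"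
      using j by (intro sum.mono_neutral_right) (auto simp: T_def)
    also have "\<dots> = a j i"
      using j by (simp add: T_def mult.commute gram_schmidt_decomp[of a j i n])
    finally show "A $$ (i, j) = (U * T) $$ (i, j)" by (simp add: a_def)
  qed (use A U T in auto)
  moreover have "det T = 1"
    using det_upper_triangular[OF _ T] by (simp add: upper_triangular_def T_def prod_list_diag_prod)
  ultimately have "det A = det U" using det_mult[OF U T] by simp
  then show ?thesis unfolding U_def a_def by (rule sym)
qed

interpretation cnj: comm_ring_hom cnj
  by unfold_locales auto

lemma norm_det_sq_orthogonal_columns:
  assumes orth: "\<And>j k. k < j \<Longrightarrow> j < n \<Longrightarrow> cinner n (u j) (u k) = 0"
  shows "(cmod (det (mat n n (\<lambda>(i, j). u j i))))\<^sup>2 = (\<Prod>j<n. sqnorm n (u j))"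
proof -
  define U where "U = mat n n (\<lambda>(i, j). u j i)"
  define G where "G = map_mat cnj (transpose_mat U) * U"
  have U: "U \<in> carrier_mat n n" by (simp add: U_def)
  then have G: "G \<in> carrier_mat n n" by (simp add: G_def)
  have G_index: "G $$ (j, k) = cinner n (u k) (u j)" if "j < n" "k < n" for j k
    using that by (simp add: G_def U_def cinner_def scalar_prod_def atLeast0LessThan mult.commute)
  have "upper_triangular G"
    unfolding upper_triangular_def
  proof (intro allI impI)
    fix j k assume "j < dim_row G" "k < j"
    then have "j < n" "k < n" using G by auto
    then show "G $$ (j, k) = 0"
      using orth[OF \<open>k < j\<close>] cinner_commute[of n "u k" "u j"] by (simp add: G_index)
  qed
  then have "det G = prod_list (diag_mat G)" using G by (rule det_upper_triangular)
  also have "\<dots> = (\<Prod>j<n. G $$ (j, j))" using G by (simp add: prod_list_diag_prod atLeast0LessThan)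
  also have "\<dots> = of_real (\<Prod>j<n. sqnorm n (u j))" by (simp add: G_index cinner_self)
  finally have detG: "det G = of_real (\<Prod>j<n. sqnorm n (u j))" .
  have "det G = cnj (det U) * det U"
    using U det_mult[of "map_mat cnj (transpose_mat U)" n U] det_transpose[OF U]
    by (simp add: G_def)
  also have "\<dots> = of_real ((cmod (det U))\<^sup>2)" by (simp only: complex_norm_square mult.commute)
  finally show ?thesis unfolding detG U_def by (simp only: of_real_eq_iff)
qed

theorem hadamard_inequality:
  fixes A :: "complex mat"
  assumes A: "A \<in> carrier_mat n n"
  shows "(cmod (det A))\<^sup>2 \<le> (\<Prod>j<n. \<Sum>i<n. (cmod (A $$ (i, j)))\<^sup>2)"
proof -
  let ?a = "\<lambda>j i. A $$ (i, j)"
  have "(cmod (det A))\<^sup>2 = (\<Prod>j<n. sqnorm n (gram_schmidt n ?a j))"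
    unfolding det_gram_schmidt_mat[OF A, symmetric]
    by (rule norm_det_sq_orthogonal_columns) (rule gram_schmidt_orthogonal)
  also have "\<dots> \<le> (\<Prod>j<n. sqnorm n (?a j))"
    using sqnorm_gram_schmidt_le[of n ?a] by (intro prod_mono) (simp add: sqnorm_nonneg)
  finally show ?thesis by (simp add: sqnorm_def)
qed

section \<open>Algebraic integers\<close>

definition int_span :: "'a :: comm_ring_1 set \<Rightarrow> 'a set" where
  "int_span S = range (\<lambda>c. \<Sum>s\<in>S. of_int (c s) * s)"

lemma int_span_eqI: "a = (\<Sum>s\<in>S. of_int (c s) * s) \<Longrightarrow> a \<in> int_span S"
  unfolding int_span_def by blast

lemma int_span_add:
  assumes "a \<in> int_span S" "b \<in> int_span S"
  shows "a + b \<in> int_span S"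
proof -
  obtain c d where "a = (\<Sum>s\<in>S. of_int (c s) * s)" "b = (\<Sum>s\<in>S. of_int (d s) * s)"
    using assms unfolding int_span_def by blast
  then have "a + b = (\<Sum>s\<in>S. of_int (c s + d s) * s)" by (simp add: sum.distrib distrib_right)
  then show ?thesis by (rule int_span_eqI)
qed

lemma int_span_of_int_mult:
  assumes "a \<in> int_span S"
  shows "of_int k * a \<in> int_span S"
proof -
  obtain c where "a = (\<Sum>s\<in>S. of_int (c s) * s)" using assms unfolding int_span_def by blast
  then have "of_int k * a = (\<Sum>s\<in>S. of_int (k * c s) * s)" by (simp add: sum_distrib_left mult.assoc)
  then show ?thesis by (rule int_span_eqI)
qed

lemma int_span_sum: "(\<And>i. i \<in> I \<Longrightarrow> f i \<in> int_span S) \<Longrightarrow> sum f I \<in> int_span S"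
proof (induction I rule: infinite_finite_induct)
  have "0 \<in> int_span S" by (rule int_span_eqI[where c = "\<lambda>_. 0"]) simp
  then show "infinite I \<Longrightarrow> sum f I \<in> int_span S" "sum f {} \<in> int_span S" for I by simp_all
qed (auto intro: int_span_add)

lemma int_span_base: "finite S \<Longrightarrow> s \<in> S \<Longrightarrow> s \<in> int_span S"
  by (rule int_span_eqI[where c = "\<lambda>t. if t = s then 1 else 0"])
    (simp add: if_distrib[of "\<lambda>k. of_int k * _"] cong: if_cong)

lemma int_span_mult_closed:
  assumes "\<And>s. s \<in> S \<Longrightarrow> z * s \<in> int_span S" "a \<in> int_span S"
  shows "z * a \<in> int_span S"
proof -
  obtain c where "a = (\<Sum>s\<in>S. of_int (c s) * s)" using assms(2) unfolding int_span_def by blast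
  then have "z * a = (\<Sum>s\<in>S. of_int (c s) * (z * s))" by (simp add: sum_distrib_left algebra_simps)
  also have "\<dots> \<in> int_span S" by (intro int_span_sum int_span_of_int_mult assms(1))
  finally show ?thesis .
qed

lemma int_span_stable_times:
  assumes "finite A" "finite B" "\<And>a. a \<in> A \<Longrightarrow> z * a \<in> int_span A"
    and "s \<in> {a * b |a b. a \<in> A \<and> b \<in> B}"
  shows "z * s \<in> int_span {a * b |a b. a \<in> A \<and> b \<in> B}"
proof -
  let ?S = "{a * b |a b. a \<in> A \<and> b \<in> B}"
  have fin: "finite ?S" using assms(1,2) by (simp add: finite_image_set2)
  obtain a b where s: "s = a * b" "a \<in> A" "b \<in> B" using assms(4) by blast
  obtain c where "z * a = (\<Sum>a'\<in>A. of_int (c a') * a')"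
    using assms(3)[OF s(2)] unfolding int_span_def by blast
  moreover have "z * s = (z * a) * b" by (simp add: s(1) mult.assoc)
  ultimately have "z * s = (\<Sum>a'\<in>A. of_int (c a') * (a' * b))"
    by (simp add: sum_distrib_right mult.assoc)
  also have "\<dots> \<in> int_span ?S"
    using s(3) by (intro int_span_sum int_span_of_int_mult int_span_base[OF fin]) blast
  finally show ?thesis .
qed

text \<open>The determinant trick: \<open>z\<close> is an eigenvalue of the integer matrix by which it acts on
  the generators.\<close>

lemma algebraic_int_if_int_span_stable:
  fixes z :: "'a :: field_char_0"
  assumes fin: "finite S" and nz: "s0 \<in> S" "s0 \<noteq> 0"
    and stable: "\<And>s. s \<in> S \<Longrightarrow> z * s \<in> int_span S"
  shows "algebraic_int z"
proof -
  obtain g where g: "set g = S" "distinct g" using finite_distinct_list[OF fin] by blast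
  define m where "m = length g"
  have "\<forall>k<m. \<exists>c. z * g ! k = (\<Sum>s\<in>S. of_int (c s) * s)"
  proof (intro allI impI)
    fix k assume "k < m"
    then have "z * g ! k \<in> int_span S" using stable g(1) m_def by auto
    then show "\<exists>c. z * g ! k = (\<Sum>s\<in>S. of_int (c s) * s)" unfolding int_span_def by auto
  qed
  then obtain C where C: "\<And>k. k < m \<Longrightarrow> z * g ! k = (\<Sum>s\<in>S. of_int (C k s) * s)"
    by metis
  define A where "A = mat m m (\<lambda>(k, l). C k (g ! l))"
  define v where "v = vec m (\<lambda>k. g ! k)"
  have A: "A \<in> carrier_mat m m" unfolding A_def by simp
  have Av: "map_mat of_int A *\<^sub>v v = z \<cdot>\<^sub>v v"
  proof (rule eq_vecI)
    fix k assume "k < dim_vec (z \<cdot>\<^sub>v v)"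
    then have k: "k < m" unfolding v_def by simp
    have "(map_mat of_int A *\<^sub>v v) $ k = (\<Sum>l<m. of_int (C k (g ! l)) * g ! l)"
      using k by (simp add: A_def v_def scalar_prod_def atLeast0LessThan)
    also have "\<dots> = z * g ! k"
      using C[OF k] sum.reindex_bij_betw[OF bij_betw_nth[OF g(2) refl refl], where g="\<lambda>s. of_int (C k s) * s"]
      by (simp add: g(1) m_def)
    finally show "(map_mat of_int A *\<^sub>v v) $ k = (z \<cdot>\<^sub>v v) $ k" using k by (simp add: v_def)
  qed (simp add: A_def v_def)
  moreover have "v \<noteq> 0\<^sub>v m"
    using nz g unfolding v_def m_def by (auto simp: vec_eq_iff in_set_conv_nth)
  ultimately have "eigenvalue (map_mat of_int A) z"
    unfolding eigenvalue_def eigenvector_def using A by (intro exI[of _ v]) (auto simp: v_def)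
  moreover have "char_poly (map_mat (of_int :: int \<Rightarrow> 'a) A) = map_poly of_int (char_poly A)"
    by (rule of_int_hom.char_poly_hom[OF A])
  ultimately have "poly (map_poly of_int (char_poly A)) z = 0"
    using eigenvalue_root_char_poly[of "map_mat (of_int :: int \<Rightarrow> 'a) A" m] A by simp
  moreover have "lead_coeff (char_poly A) = 1" using degree_monic_char_poly[OF A] by simp
  ultimately show ?thesis unfolding algebraic_int_altdef_ipoly by blast
qed

lemma algebraic_int_powers_stable:
  fixes x :: "'a :: field_char_0"
  assumes "algebraic_int x"
  shows "\<exists>d>0. \<forall>s\<in>power x ` {..<d}. x * s \<in> int_span (power x ` {..<d})"
proof -
  obtain p where p: "poly (map_poly of_int p) x = 0" "lead_coeff p = 1"
    using algebraic_int_altdef_ipoly[THEN iffD1, OF assms] by blast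
  define d where "d = degree p"
  let ?A = "power x ` {..<d}"
  have sum0: "0 = (\<Sum>i\<le>d. of_int (coeff p i) * x ^ i)"
    using p(1) by (simp add: poly_altdef d_def degree_map_poly coeff_map_poly)
  also have "\<dots> = (\<Sum>i<d. of_int (coeff p i) * x ^ i) + x ^ d"
    using p(2) by (simp add: lessThan_Suc_atMost[symmetric] d_def)
  finally have "x ^ d = (\<Sum>i<d. of_int (- coeff p i) * x ^ i)"
    by (simp add: sum_negf eq_neg_iff_add_eq_0 add.commute)
  also have "\<dots> \<in> int_span ?A" by (intro int_span_sum int_span_of_int_mult int_span_base) auto
  finally have xd: "x ^ d \<in> int_span ?A" .
  have "d > 0"
  proof (rule Nat.gr0I)
    assume "d = 0"
    then show False using sum0 p(2) by (simp add: d_def)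
  qed
  have step: "x * x ^ i \<in> int_span ?A" if "i < d" for i
  proof (cases "Suc i = d")
    case True
    then show ?thesis using xd by auto
  next
    case False
    then have "x ^ Suc i \<in> ?A" using that by (intro imageI) simp
    then show ?thesis by (auto intro: int_span_base)
  qed
  show ?thesis using \<open>d > 0\<close> step by (intro exI[of _ d]) auto
qed

lemma algebraic_int_add_mult:
  fixes x y :: "'a :: field_char_0"
  assumes "algebraic_int x" "algebraic_int y"
  shows "algebraic_int (x + y)" "algebraic_int (x * y)"
proof -
  obtain d where d: "d > 0" "\<forall>s\<in>power x ` {..<d}. x * s \<in> int_span (power x ` {..<d})"
    using algebraic_int_powers_stable[OF assms(1)] by auto
  obtain e where e: "e > 0" "\<forall>s\<in>power y ` {..<e}. y * s \<in> int_span (power y ` {..<e})"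
    using algebraic_int_powers_stable[OF assms(2)] by auto
  define S where "S = {a * b |a b. a \<in> power x ` {..<d} \<and> b \<in> power y ` {..<e}}"
  have S_swap: "S = {b * a |b a. b \<in> power y ` {..<e} \<and> a \<in> power x ` {..<d}}"
    unfolding S_def by (rule Collect_cong) (metis mult.commute)
  have fin: "finite S" unfolding S_def by (simp add: finite_image_set2)
  have one: "1 \<in> S" unfolding S_def using d(1) e(1) by force
  have X: "x * s \<in> int_span S" if "s \<in> S" for s
    using that unfolding S_def by (intro int_span_stable_times d(2)[rule_format]) auto
  have Y: "y * s \<in> int_span S" if "s \<in> S" for s
    using that unfolding S_swap by (intro int_span_stable_times e(2)[rule_format]) auto
  show "algebraic_int (x + y)"
    by (rule algebraic_int_if_int_span_stable[OF fin one]) (auto simp: distrib_right intro: int_span_add X Y)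
  show "algebraic_int (x * y)"
    by (rule algebraic_int_if_int_span_stable[OF fin one])
      (auto simp: mult.assoc intro: int_span_mult_closed X Y)
qed

lemma algebraic_int_diff:
  "algebraic_int (x :: 'a :: field_char_0) \<Longrightarrow> algebraic_int y \<Longrightarrow> algebraic_int (x - y)"
  using algebraic_int_add_mult(1)[of x "- y"] algebraic_int_minus by auto

lemma algebraic_int_sum:
  "(\<And>i. i \<in> I \<Longrightarrow> algebraic_int (f i :: 'a :: field_char_0)) \<Longrightarrow> algebraic_int (sum f I)"
  by (induction I rule: infinite_finite_induct) (auto intro: algebraic_int_add_mult(1))

section \<open>Subfields of \<open>\<complex>\<close> and their automorphisms\<close>

locale complex_subfield =
  fixes K :: "complex set"
  assumes subfield: "subfield_C K"
begin

lemma zero_mem: "0 \<in> K" and one_mem: "1 \<in> K"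
  using subfield unfolding subfield_C_def by auto

lemma add_mem: "x \<in> K \<Longrightarrow> y \<in> K \<Longrightarrow> x + y \<in> K"
  and diff_mem: "x \<in> K \<Longrightarrow> y \<in> K \<Longrightarrow> x - y \<in> K"
  and mult_mem: "x \<in> K \<Longrightarrow> y \<in> K \<Longrightarrow> x * y \<in> K"
  using subfield unfolding subfield_C_def by auto

lemma inverse_mem: "x \<in> K \<Longrightarrow> inverse x \<in> K"
  using subfield zero_mem unfolding subfield_C_def by (cases "x = 0") auto

lemma minus_mem: "x \<in> K \<Longrightarrow> - x \<in> K"
  using diff_mem[OF zero_mem] by fastforce

lemma sum_mem: "(\<And>i. i \<in> I \<Longrightarrow> f i \<in> K) \<Longrightarrow> sum f I \<in> K"
  by (induction I rule: infinite_finite_induct) (auto intro: zero_mem add_mem)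

lemma power_mem: "x \<in> K \<Longrightarrow> x ^ m \<in> K"
  by (induction m) (auto intro: one_mem mult_mem)

lemma of_nat_mem: "of_nat m \<in> K"
  by (induction m) (auto intro: zero_mem one_mem add_mem)

lemma Rats_mem: "x \<in> \<rat> \<Longrightarrow> x \<in> K"
proof (elim Rats_cases)
  fix r assume x: "x = of_rat r"
  obtain a b where "r = Rat.Fract a b" "b > 0" by (cases r) auto
  then have "x = of_int a / of_int b" using x by (simp add: of_rat_rat)
  moreover have "of_int k \<in> K" for k
    by (cases k rule: int_cases) (auto intro: of_nat_mem minus_mem simp del: of_nat_Suc)
  ultimately show "x \<in> K" unfolding divide_inverse by (auto intro: mult_mem inverse_mem)
qed

lemma lincomb_mem:
  "(\<And>i. i \<in> I \<Longrightarrow> c i \<in> \<rat>) \<Longrightarrow> (\<And>i. i \<in> I \<Longrightarrow> f i \<in> K) \<Longrightarrow> (\<Sum>i\<in>I. c i * f i) \<in> K"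
  by (intro sum_mem mult_mem[OF Rats_mem])

lemma gal_eqI:
  assumes "\<sigma> \<in> gal K" "\<tau> \<in> gal K" "\<And>x. x \<in> K \<Longrightarrow> \<sigma> x = \<tau> x"
  shows "\<sigma> = \<tau>"
proof
  fix x show "\<sigma> x = \<tau> x" using assms by (cases "x \<in> K") (auto simp: gal_def)
qed

end

locale field_automorphism = complex_subfield +
  fixes \<sigma> :: "complex \<Rightarrow> complex"
  assumes in_gal: "\<sigma> \<in> gal K"
begin

lemma maps_to: "x \<in> K \<Longrightarrow> \<sigma> x \<in> K"
  and hom_add: "x \<in> K \<Longrightarrow> y \<in> K \<Longrightarrow> \<sigma> (x + y) = \<sigma> x + \<sigma> y"
  and hom_mult: "x \<in> K \<Longrightarrow> y \<in> K \<Longrightarrow> \<sigma> (x * y) = \<sigma> x * \<sigma> y"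
  and hom_one: "\<sigma> 1 = 1"
  and surj: "\<sigma> ` K = K"
  using in_gal unfolding gal_def bij_betw_def by auto

lemma hom_zero: "\<sigma> 0 = 0"
  using hom_add[OF zero_mem zero_mem] by simp

lemma hom_minus: "x \<in> K \<Longrightarrow> \<sigma> (- x) = - \<sigma> x"
  using hom_add[OF _ minus_mem, of x x] hom_zero by (simp add: eq_neg_iff_add_eq_0 add.commute)

lemma hom_sum: "(\<And>i. i \<in> I \<Longrightarrow> f i \<in> K) \<Longrightarrow> \<sigma> (sum f I) = (\<Sum>i\<in>I. \<sigma> (f i))"
  by (induction I rule: infinite_finite_induct) (auto simp: hom_zero hom_add sum_mem)

lemma hom_power: "x \<in> K \<Longrightarrow> \<sigma> (x ^ m) = \<sigma> x ^ m"
  by (induction m) (auto simp: hom_one hom_mult power_mem)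

lemma hom_of_nat: "\<sigma> (of_nat m) = of_nat m"
  by (induction m) (auto simp: hom_zero hom_one hom_add[OF one_mem of_nat_mem])

lemma hom_Rats: "x \<in> \<rat> \<Longrightarrow> \<sigma> x = x"
proof (elim Rats_cases)
  fix r assume x: "x = of_rat r"
  obtain a b where ab: "r = Rat.Fract a b" "b > 0" by (cases r) auto
  have hom_of_int: "\<sigma> (of_int k) = of_int k" for k
    by (cases k rule: int_cases) (auto simp: hom_of_nat hom_minus of_nat_mem simp del: of_nat_Suc)
  have "x * of_int b = of_int a" using x ab by (simp add: of_rat_rat)
  then have "\<sigma> x * of_int b = x * of_int b"
    using hom_mult[OF Rats_mem Rats_mem] x hom_of_int by (metis Rats_of_int Rats_of_rat)
  then show "\<sigma> x = x" using ab by simp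
qed

lemma hom_lincomb:
  "(\<And>i. i \<in> I \<Longrightarrow> c i \<in> \<rat>) \<Longrightarrow> (\<And>i. i \<in> I \<Longrightarrow> f i \<in> K) \<Longrightarrow>
   \<sigma> (\<Sum>i\<in>I. c i * f i) = (\<Sum>i\<in>I. c i * \<sigma> (f i))"
  by (simp add: hom_sum hom_mult Rats_mem mult_mem hom_Rats)

lemma algebraic_int_hom:
  assumes "x \<in> K" "algebraic_int x"
  shows "algebraic_int (\<sigma> x)"
proof -
  from assms(2) obtain p where p: "lead_coeff p = 1" "\<forall>i. coeff p i \<in> \<int>" "poly p x = 0"
    by (auto elim: algebraic_int.cases)
  have "\<sigma> (poly p x) = poly p (\<sigma> x)"
    using p(2) assms(1) unfolding poly_altdef
    by (simp add: hom_lincomb Ints_subset_Rats[THEN subsetD] power_mem hom_power)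
  then show ?thesis using p hom_zero by (intro algebraic_int.intros) auto
qed

end

lemma gal_comp:
  assumes "\<sigma> \<in> gal K" "\<tau> \<in> gal K"
  shows "\<sigma> \<circ> \<tau> \<in> gal K"
proof -
  have "bij_betw (\<sigma> \<circ> \<tau>) K K" using assms unfolding gal_def using bij_betw_trans by blast
  moreover have "\<tau> x \<in> K" if "x \<in> K" for x
    using assms(2) that unfolding gal_def bij_betw_def by blast
  ultimately show ?thesis using assms unfolding gal_def by auto
qed

lemma (in complex_subfield) gal_linear_independent:
  assumes "finite I" "inj_on \<sigma> I" "\<sigma> ` I \<subseteq> gal K" "\<And>x. x \<in> K \<Longrightarrow> (\<Sum>i\<in>I. c i * \<sigma> i x) = 0"
  shows "\<forall>i\<in>I. c i = 0"
  using assms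
proof (induction I arbitrary: c rule: finite_induct)
  case empty then show ?case by simp
next
  case (insert i0 I)
  interpret \<sigma>0: field_automorphism K "\<sigma> i0" using insert.prems(2) by unfold_locales auto
  have aut: "field_automorphism K (\<sigma> i)" if "i \<in> I" for i
    using insert.prems(2) that by unfold_locales auto
  have rel: "c i0 * \<sigma> i0 x + (\<Sum>i\<in>I. c i * \<sigma> i x) = 0" if "x \<in> K" for x
    using insert that by simp
  have "c i = 0" if i: "i \<in> I" for i
  proof -
    have "\<sigma> i \<noteq> \<sigma> i0" using insert.prems(1) insert.hyps(2) i by (auto simp: inj_on_def)
    then obtain y where y: "y \<in> K" "\<sigma> i y \<noteq> \<sigma> i0 y"
      using gal_eqI insert.prems(2) i by blast
    \<comment> \<open>subtract \<open>\<sigma>\<^sub>i\<^sub>0 y\<close> times the relation at \<open>x\<close> from the relation at \<open>y x\<close>\<close>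
    have "(\<Sum>i\<in>I. c i * (\<sigma> i y - \<sigma> i0 y) * \<sigma> i x) = 0" if x: "x \<in> K" for x
    proof -
      have "(\<Sum>i\<in>I. c i * (\<sigma> i y - \<sigma> i0 y) * \<sigma> i x)
          = (c i0 * \<sigma> i0 (y * x) + (\<Sum>i\<in>I. c i * \<sigma> i (y * x)))
            - \<sigma> i0 y * (c i0 * \<sigma> i0 x + (\<Sum>i\<in>I. c i * \<sigma> i x))"
        using x y(1) by (simp add: field_automorphism.hom_mult[OF aut] \<sigma>0.hom_mult algebra_simps
            sum_subtractf sum_distrib_left)
      then show ?thesis using rel x y(1) mult_mem by simp
    qed
    then have "\<forall>i\<in>I. c i * (\<sigma> i y - \<sigma> i0 y) = 0"
      using insert.IH[of "\<lambda>i. c i * (\<sigma> i y - \<sigma> i0 y)"] insert.prems by auto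
    then have "c i * (\<sigma> i y - \<sigma> i0 y) = 0" using i by blast
    then show "c i = 0" using y(2) by simp
  qed
  moreover have "c i0 = 0" using rel[OF one_mem] calculation \<sigma>0.hom_one by simp
  ultimately show ?case by simp
qed

section \<open>\<open>K\<close> as a vector space over \<open>\<rat>\<close>\<close>

interpretation Q: vector_space "\<lambda>(r::rat) (x::complex). of_rat r * x"
  by unfold_locales (simp_all add: algebra_simps of_rat_add of_rat_mult)

lemma sum_set_conv_nth: "distinct b \<Longrightarrow> (\<Sum>x\<in>set b. f x) = (\<Sum>i<length b. f (b ! i))"
  using sum.reindex_bij_betw[OF bij_betw_nth[of b "{..<length b}" "set b"], of f] by simp

lemma q_indep_distinct:
  assumes "q_indep b"
  shows "distinct b"
proof (rule ccontr)
  assume "\<not> distinct b"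
  then obtain i j where ij: "i < length b" "j < length b" "i \<noteq> j" "b ! i = b ! j"
    by (auto simp: distinct_conv_nth)
  define c where "c k = (if k = i then 1 else if k = j then -1 else (0::rat))" for k
  have "of_rat (c k) * b ! k = (if k = i then b ! i else 0) - (if k = j then b ! j else 0)" for k
    using ij unfolding c_def by auto
  then have "(\<Sum>k<length b. of_rat (c k) * b ! k) = 0"
    using ij by (simp add: sum_subtractf)
  then have "c i = 0" using assms ij unfolding q_indep_def by blast
  then show False unfolding c_def by simp
qed

lemma q_indep_independent:
  assumes "q_indep b"
  shows "Q.independent (set b)"
proof
  assume "Q.dependent (set b)"
  then obtain u where u: "\<exists>v\<in>set b. u v \<noteq> 0" "(\<Sum>v\<in>set b. of_rat (u v) * v) = 0"
    unfolding Q.dependent_finite[OF finite_set] by blast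
  then have "(\<Sum>i<length b. of_rat (u (b ! i)) * b ! i) = 0"
    by (simp add: sum_set_conv_nth q_indep_distinct[OF assms])
  then have "\<forall>i<length b. u (b ! i) = 0"
    using assms[unfolded q_indep_def, rule_format, of "\<lambda>i. u (b ! i)"] by blast
  then show False using u(1) by (auto simp: in_set_conv_nth)
qed

lemma Q_span_lincomb: "(\<Sum>i<length b. of_rat (c i) * b ! i) \<in> Q.span (set b)"
  by (intro Q.span_sum Q.span_scale Q.span_base) auto

lemma Q_span_set_conv_nth:
  assumes "distinct b"
  shows "Q.span (set b) = range (\<lambda>c. \<Sum>i<length b. of_rat (c i) * b ! i)"
proof -
  have "range (\<lambda>c. \<Sum>i<length b. of_rat (c i) * b ! i) = range (\<lambda>u. \<Sum>x\<in>set b. of_rat (u x) * x)"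
  proof (intro equalityI image_subsetI)
    fix c :: "nat \<Rightarrow> rat"
    show "(\<Sum>i<length b. of_rat (c i) * b ! i) \<in> range (\<lambda>u. \<Sum>x\<in>set b. of_rat (u x) * x)"
      using Q_span_lincomb Q.span_finite[OF finite_set] by simp
  next
    fix u :: "complex \<Rightarrow> rat"
    show "(\<Sum>x\<in>set b. of_rat (u x) * x) \<in> range (\<lambda>c. \<Sum>i<length b. of_rat (c i) * b ! i)"
      by (rule range_eqI[of _ _ "\<lambda>i. u (b ! i)"]) (simp add: sum_set_conv_nth assms)
  qed
  then show ?thesis using Q.span_finite[OF finite_set] by simp
qed

lemma q_basis_iff: "q_basis K b \<longleftrightarrow> set b \<subseteq> K \<and> q_indep b \<and> K \<subseteq> Q.span (set b)"
  unfolding q_basis_def by (auto simp: Q_span_set_conv_nth q_indep_distinct image_iff)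

lemma q_basis_length_eq_dim: "q_basis K b \<Longrightarrow> length b = Q.dim K"
  by (metis q_basis_iff q_indep_independent q_indep_distinct Q.basis_card_eq_dim distinct_card)

lemma q_basis_if_length_eq_dim:
  assumes b: "q_indep b" "set b \<subseteq> K" "length b = Q.dim K" and b': "q_basis K b'"
  shows "q_basis K b"
  unfolding q_basis_iff
proof (intro conjI subsetI)
  have K: "K \<subseteq> Q.span (set b')" using b' q_basis_iff by blast
  fix x assume "x \<in> K"
  show "x \<in> Q.span (set b)"
  proof (rule ccontr)
    assume x: "x \<notin> Q.span (set b)"
    then have "x \<notin> set b" using Q.span_base by blast
    have "Q.independent (insert x (set b))"
      by (rule Q.independent_insertI[OF x q_indep_independent[OF b(1)]])
    moreover have "insert x (set b) \<subseteq> Q.span (set b')" using \<open>x \<in> K\<close> b(2) K by blast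
    ultimately have "card (insert x (set b)) \<le> card (set b')" using Q.independent_span_bound by blast
    then show False
      using \<open>x \<notin> set b\<close> b b' q_basis_length_eq_dim[OF b'] q_indep_distinct
      by (simp add: distinct_card q_basis_def)
  qed
qed (use b in auto)

lemma coord_repr:
  assumes "q_basis K b" "x \<in> K"
  shows "x = (\<Sum>i<length b. of_rat (coord b x i) * b ! i)"
proof -
  let ?P = "\<lambda>c. (\<forall>i. length b \<le> i \<longrightarrow> c i = 0) \<and> x = (\<Sum>i<length b. of_rat (c i) * b ! i)"
  obtain c where c: "x = (\<Sum>i<length b. of_rat (c i) * b ! i)"
    using assms unfolding q_basis_def by blast
  define c0 where "c0 i = (if i < length b then c i else 0)" for i
  have "?P c0" using c by (simp add: c0_def)
  moreover have "d = c0" if "?P d" for d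
  proof
    fix k
    have "(\<Sum>i<length b. of_rat (d i - c0 i) * b ! i) = 0"
      using that \<open>?P c0\<close> by (simp add: of_rat_diff left_diff_distrib sum_subtractf)
    then show "d k = c0 k"
      using assms(1) that \<open>?P c0\<close> unfolding q_basis_def q_indep_def by (cases "k < length b") auto
  qed
  ultimately have "?P (coord b x)" unfolding coord_def by (rule theI)
  then show ?thesis by blast
qed

section \<open>The matrix of conjugates, traces and discriminants\<close>

definition mat_trace :: "'a :: comm_ring_1 mat \<Rightarrow> 'a" where
  "mat_trace A = (\<Sum>i<dim_row A. A $$ (i, i))"

lemma mat_trace_mult_comm:
  assumes "A \<in> carrier_mat n m" "B \<in> carrier_mat m n"
  shows "mat_trace (A * B) = mat_trace (B * A)"
proof -
  have "mat_trace (A * B) = (\<Sum>i<n. \<Sum>k<m. A $$ (i, k) * B $$ (k, i))"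
    using assms by (simp add: mat_trace_def scalar_prod_def atLeast0LessThan)
  also have "\<dots> = (\<Sum>k<m. \<Sum>i<n. B $$ (k, i) * A $$ (i, k))"
    by (subst sum.swap) (simp add: mult.commute)
  also have "\<dots> = mat_trace (B * A)"
    using assms by (simp add: mat_trace_def scalar_prod_def atLeast0LessThan)
  finally show ?thesis .
qed

lemma mat_trace_eq_if_intertwined:
  fixes A B P :: "'a :: field mat"
  assumes "A \<in> carrier_mat n n" "B \<in> carrier_mat n n" "P \<in> carrier_mat n n"
    and "det P \<noteq> 0" and "P * A = B * P"
  shows "mat_trace A = mat_trace B"
proof -
  have adj: "adj_mat P * P = det P \<cdot>\<^sub>m 1\<^sub>m n" "P * adj_mat P = det P \<cdot>\<^sub>m 1\<^sub>m n" "adj_mat P \<in> carrier_mat n n"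
    using adj_mat[OF assms(3)] by auto
  have trace_smult: "mat_trace (a \<cdot>\<^sub>m M) = a * mat_trace M" if "M \<in> carrier_mat n n" for a M
    using that by (simp add: mat_trace_def sum_distrib_left)
  have "det P * mat_trace A = mat_trace ((adj_mat P * P) * A)"
    using assms(1) adj by (simp add: trace_smult mult_smult_assoc_mat[of "1\<^sub>m n" n n A n])
  also have "\<dots> = mat_trace (adj_mat P * (B * P))"
    using assms(1,3,5) adj(3) by (simp add: assoc_mult_mat[of _ n n P n A n])
  also have "\<dots> = mat_trace ((B * P) * adj_mat P)"
    using assms adj by (intro mat_trace_mult_comm) auto
  also have "\<dots> = det P * mat_trace B"
    using assms adj by (simp add: assoc_mult_mat[of B n n P n _ n] mult_smult_distrib[of B n n _ n] trace_smult)
  finally show ?thesis using assms(4) by simp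
qed

locale galois_enumeration =
  fixes K :: "complex set" and \<sigma> :: "nat \<Rightarrow> complex \<Rightarrow> complex" and n :: nat
  assumes number_field: "number_field K"
    and degree: "n = degree_Q K"
    and enum: "bij_betw \<sigma> {..<n} (gal K)"
begin

sublocale complex_subfield K
  using number_field unfolding number_field_def by unfold_locales blast

lemma automorphism: "i < n \<Longrightarrow> field_automorphism K (\<sigma> i)"
  using enum by unfold_locales (auto simp: bij_betw_def)

lemma some_q_basis: "q_basis K (SOME b. q_basis K b)"
  using number_field unfolding number_field_def by (metis someI_ex)

lemma q_basis_length: "q_basis K b \<Longrightarrow> length b = n"
  using q_basis_length_eq_dim some_q_basis unfolding degree degree_Q_def by metis

definition conj_mat :: "complex list \<Rightarrow> complex mat" where
  "conj_mat w = mat n n (\<lambda>(i, j). \<sigma> i (w ! j))"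

lemma conj_mat_carrier [simp]: "conj_mat w \<in> carrier_mat n n"
  by (simp add: conj_mat_def)

lemma conj_mat_dim [simp]: "dim_row (conj_mat w) = n" "dim_col (conj_mat w) = n"
  by (simp_all add: conj_mat_def)

lemma conj_mat_index [simp]: "i < n \<Longrightarrow> j < n \<Longrightarrow> conj_mat w $$ (i, j) = \<sigma> i (w ! j)"
  by (simp add: conj_mat_def)

lemma conj_mat_mult_vec:
  assumes "set w \<subseteq> K" "length w = n" "\<And>j. j < n \<Longrightarrow> c j \<in> \<rat>"
  shows "conj_mat w *\<^sub>v vec n c = vec n (\<lambda>i. \<sigma> i (\<Sum>j<n. c j * w ! j))"
proof (rule eq_vecI)
  fix i assume "i < dim_vec (vec n (\<lambda>i. \<sigma> i (\<Sum>j<n. c j * w ! j)))"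
  then have i: "i < n" by simp
  have "(conj_mat w *\<^sub>v vec n c) $ i = (\<Sum>j<n. c j * \<sigma> i (w ! j))"
    using i by (simp add: scalar_prod_def atLeast0LessThan mult.commute)
  also have "\<dots> = \<sigma> i (\<Sum>j<n. c j * w ! j)"
    using assms by (intro field_automorphism.hom_lincomb[OF automorphism[OF i], symmetric]) auto
  finally show "(conj_mat w *\<^sub>v vec n c) $ i = vec n (\<lambda>i. \<sigma> i (\<Sum>j<n. c j * w ! j)) $ i"
    using i by simp
qed simp

lemma conj_mat_change_of_basis:
  assumes "set w \<subseteq> K" "length w = n" "\<And>j k. c j k \<in> \<rat>"
    and "\<And>j. j < n \<Longrightarrow> v ! j = (\<Sum>k<n. c j k * w ! k)"
  shows "conj_mat v = conj_mat w * mat n n (\<lambda>(k, j). c j k)"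
proof (rule eq_matI)
  fix i j assume "i < dim_row (conj_mat w * mat n n (\<lambda>(k, j). c j k))"
    "j < dim_col (conj_mat w * mat n n (\<lambda>(k, j). c j k))"
  then have i: "i < n" and j: "j < n" by auto
  have "(conj_mat w * mat n n (\<lambda>(k, j). c j k)) $$ (i, j) = (\<Sum>k<n. c j k * \<sigma> i (w ! k))"
    using i j by (simp add: scalar_prod_def atLeast0LessThan mult.commute)
  also have "\<dots> = \<sigma> i (\<Sum>k<n. c j k * w ! k)"
    using assms(1-3) by (intro field_automorphism.hom_lincomb[OF automorphism[OF i], symmetric]) auto
  also have "\<dots> = \<sigma> i (v ! j)" using assms(4)[OF j] by simp
  finally show "conj_mat v $$ (i, j) = (conj_mat w * mat n n (\<lambda>(k, j). c j k)) $$ (i, j)"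
    using i j by simp
qed auto

lemma det_conj_mat_nonzero:
  assumes w: "q_basis K w"
  shows "det (conj_mat w) \<noteq> 0"
proof
  assume "det (conj_mat w) = 0"
  then obtain v where v: "v \<in> carrier_vec n" "v \<noteq> 0\<^sub>v n" "transpose_mat (conj_mat w) *\<^sub>v v = 0\<^sub>v n"
    using det_0_iff_vec_prod_zero[of "transpose_mat (conj_mat w)" n]
      det_transpose[OF conj_mat_carrier] by auto
  have len: "length w = n" using q_basis_length[OF w] .
  have vanish: "(\<Sum>i<n. v $ i * \<sigma> i (w ! k)) = 0" if "k < n" for k
    using arg_cong[OF v(3), of "\<lambda>u. u $ k"] that v(1)
    by (simp add: scalar_prod_def atLeast0LessThan mult.commute)
  have "(\<Sum>i\<in>{..<n}. v $ i * \<sigma> i x) = 0" if x: "x \<in> K" for x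
  proof -
    obtain c where c: "x = (\<Sum>k<n. of_rat (c k) * w ! k)"
      using w x len unfolding q_basis_def by metis
    have "(\<Sum>i<n. v $ i * \<sigma> i x) = (\<Sum>i<n. v $ i * (\<Sum>k<n. of_rat (c k) * \<sigma> i (w ! k)))"
      using w len unfolding c q_basis_def
      by (intro sum.cong refl arg_cong[where f="\<lambda>z. _ * z"] field_automorphism.hom_lincomb[OF automorphism])
        auto
    also have "\<dots> = (\<Sum>i<n. \<Sum>k<n. of_rat (c k) * (v $ i * \<sigma> i (w ! k)))"
      by (simp add: sum_distrib_left mult.left_commute)
    also have "\<dots> = (\<Sum>k<n. of_rat (c k) * (\<Sum>i<n. v $ i * \<sigma> i (w ! k)))"
      by (subst sum.swap) (simp add: sum_distrib_left)
    finally show ?thesis using vanish by simp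
  qed
  then have "\<forall>i\<in>{..<n}. v $ i = 0"
    using gal_linear_independent[of "{..<n}" \<sigma>] enum unfolding bij_betw_def by blast
  then show False using v(1,2) by (auto simp: vec_eq_iff)
qed

lemma q_basis_if_det_conj_mat_nonzero:
  assumes w: "set w \<subseteq> K" "length w = n" and det: "det (conj_mat w) \<noteq> 0"
  shows "q_basis K w"
proof (rule q_basis_if_length_eq_dim[OF _ w(1) _ some_q_basis])
  show "q_indep w" unfolding q_indep_def
  proof (intro allI impI)
    fix c :: "nat \<Rightarrow> rat" and i
    assume "(\<Sum>i<length w. of_rat (c i) * w ! i) = 0" "i < length w"
    then have "conj_mat w *\<^sub>v vec n (\<lambda>j. of_rat (c j)) = 0\<^sub>v n"
      using w conj_mat_mult_vec[OF w, of "\<lambda>j. of_rat (c j)"]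
        field_automorphism.hom_zero[OF automorphism] by (auto simp: vec_eq_iff)
    then have "vec n (\<lambda>j. of_rat (c j) :: complex) = 0\<^sub>v n"
      using det det_0_iff_vec_prod_zero[OF conj_mat_carrier, of w] vec_carrier by blast
    then show "c i = 0" using w(2) \<open>i < length w\<close> by (auto simp: vec_eq_iff)
  qed
  show "length w = Q.dim K"
    using w(2) q_basis_length_eq_dim[OF some_q_basis] q_basis_length[OF some_q_basis] by simp
qed

lemma trace_eq_sum_conjugates:
  assumes x: "x \<in> K"
  shows "of_rat (trace_Q K x) = (\<Sum>i<n. \<sigma> i x)"
proof -
  define b where "b = (SOME b. q_basis K b)"
  have b: "q_basis K b" and len: "length b = n"
    unfolding b_def using some_q_basis q_basis_length by blast+
  have bK: "b ! k \<in> K" if "k < n" for k using b len that unfolding q_basis_def by auto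
  \<comment> \<open>the matrix of multiplication by \<open>x\<close> in the basis \<open>b\<close> is conjugate to \<open>diag (\<sigma>\<^sub>i x)\<close>\<close>
  define M where "M = mat n n (\<lambda>(k, j). of_rat (coord b (x * b ! j) k) :: complex)"
  define D where "D = mat n n (\<lambda>(i, j). if i = j then \<sigma> i x else 0)"
  have "conj_mat b * M = D * conj_mat b"
  proof (rule eq_matI)
    fix i j assume "i < dim_row (D * conj_mat b)" "j < dim_col (D * conj_mat b)"
    then have i: "i < n" and j: "j < n" by (auto simp: D_def)
    interpret \<sigma>: field_automorphism K "\<sigma> i" using automorphism[OF i] .
    have "(conj_mat b * M) $$ (i, j) = (\<Sum>k<n. of_rat (coord b (x * b ! j) k) * \<sigma> i (b ! k))"
      using i j by (simp add: M_def scalar_prod_def atLeast0LessThan mult.commute)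
    also have "\<dots> = \<sigma> i (\<Sum>k<n. of_rat (coord b (x * b ! j) k) * b ! k)"
      using bK by (intro \<sigma>.hom_lincomb[symmetric]) auto
    also have "\<dots> = \<sigma> i x * \<sigma> i (b ! j)"
      using coord_repr[OF b mult_mem[OF x bK[OF j]]] len \<sigma>.hom_mult[OF x bK[OF j]] by simp
    also have "\<dots> = (D * conj_mat b) $$ (i, j)"
      using i j by (simp add: D_def scalar_prod_def atLeast0LessThan if_distrib[of "\<lambda>t. t * _"]
          cong: if_cong)
    finally show "(conj_mat b * M) $$ (i, j) = (D * conj_mat b) $$ (i, j)" .
  qed (auto simp: D_def M_def)
  then have "mat_trace M = mat_trace D"
    using mat_trace_eq_if_intertwined[OF _ _ conj_mat_carrier det_conj_mat_nonzero[OF b]]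
    by (simp add: M_def D_def)
  then show ?thesis
    by (simp add: mat_trace_def M_def D_def trace_Q_def Let_def b_def[symmetric] len of_rat_sum)
qed

lemma det_trace_form_eq_det_conj_mat_sq:
  assumes w: "set w \<subseteq> K" "length w = n"
  shows "of_rat (det (mat n n (\<lambda>(i, j). trace_Q K (w ! i * w ! j)))) = det (conj_mat w) ^ 2"
proof -
  let ?W = "conj_mat w"
  have wK: "w ! k \<in> K" if "k < n" for k using w that by auto
  have "map_mat of_rat (mat n n (\<lambda>(i, j). trace_Q K (w ! i * w ! j))) = transpose_mat ?W * ?W"
  proof (rule eq_matI)
    fix i j assume "i < dim_row (transpose_mat ?W * ?W)" "j < dim_col (transpose_mat ?W * ?W)"
    then have i: "i < n" and j: "j < n" by auto
    have "of_rat (trace_Q K (w ! i * w ! j)) = (\<Sum>k<n. \<sigma> k (w ! i) * \<sigma> k (w ! j))"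
      using trace_eq_sum_conjugates[OF mult_mem[OF wK[OF i] wK[OF j]]]
        field_automorphism.hom_mult[OF automorphism wK[OF i] wK[OF j]] by simp
    then show "map_mat of_rat (mat n n (\<lambda>(i, j). trace_Q K (w ! i * w ! j))) $$ (i, j)
        = (transpose_mat ?W * ?W) $$ (i, j)"
      using i j by (simp add: scalar_prod_def atLeast0LessThan)
  qed auto
  then have "of_rat (det (mat n n (\<lambda>(i, j). trace_Q K (w ! i * w ! j)))) = det (transpose_mat ?W * ?W)"
    by (metis of_rat_hom.hom_det)
  also have "\<dots> = det ?W ^ 2"
    by (simp add: det_mult[of "transpose_mat ?W" n ?W] det_transpose[OF conj_mat_carrier] power2_eq_square)
  finally show ?thesis .
qed

end

section \<open>Integral bases\<close>

lemma cmod_of_rat: "cmod (of_rat q) = \<bar>of_rat q\<bar>"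
proof -
  have "(of_rat q :: complex) = of_real (of_rat q)" by (cases q) (simp add: of_rat_rat)
  then show ?thesis by simp
qed

context galois_enumeration
begin

lemma ring_of_integersD: "x \<in> ring_of_integers K \<Longrightarrow> x \<in> K \<and> algebraic_int x"
  by (simp add: ring_of_integers_def)

lemma ring_of_integers_mult:
  "x \<in> ring_of_integers K \<Longrightarrow> y \<in> ring_of_integers K \<Longrightarrow> x * y \<in> ring_of_integers K"
  by (simp add: ring_of_integers_def mult_mem algebraic_int_add_mult(2))

lemma conj_in_ring_of_integers:
  "i < n \<Longrightarrow> x \<in> ring_of_integers K \<Longrightarrow> \<sigma> i x \<in> ring_of_integers K"
  using field_automorphism.maps_to[OF automorphism] field_automorphism.algebraic_int_hom[OF automorphism]
  by (simp add: ring_of_integers_def)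

lemma trace_in_Ints:
  assumes "x \<in> ring_of_integers K"
  shows "trace_Q K x \<in> \<int>"
proof -
  have "algebraic_int (of_rat (trace_Q K x) :: complex)"
    using assms trace_eq_sum_conjugates conj_in_ring_of_integers
    by (auto intro!: algebraic_int_sum simp: ring_of_integers_def)
  then have "(of_rat (trace_Q K x) :: complex) \<in> \<int>"
    by (rule rational_algebraic_int_is_int) simp
  then show ?thesis by (metis Ints_cases Ints_of_int of_rat_eq_iff of_rat_of_int_eq)
qed

lemma det_conj_mat_sq_in_Ints:
  assumes w: "set w \<subseteq> ring_of_integers K" "length w = n"
  shows "det (conj_mat w) ^ 2 \<in> \<int>"
proof -
  have "w ! i \<in> ring_of_integers K" if "i < n" for i
    using w nth_mem that by blast
  then have wO: "w ! i * w ! j \<in> ring_of_integers K" if "i < n" "j < n" for i j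
    using that by (simp add: ring_of_integers_mult)
  define T where "T = mat n n (\<lambda>(i, j). \<lfloor>trace_Q K (w ! i * w ! j)\<rfloor>)"
  have "mat n n (\<lambda>(i, j). trace_Q K (w ! i * w ! j)) = map_mat of_int T"
    using trace_in_Ints[OF wO] by (auto simp: T_def elim!: Ints_cases)
  moreover have "set w \<subseteq> K" using w(1) by (auto simp: ring_of_integers_def)
  ultimately have "det (conj_mat w) ^ 2 = of_int (det T)"
    using det_trace_form_eq_det_conj_mat_sq[OF _ w(2)] by simp
  then show ?thesis by simp
qed

lemma norm_det_conj_mat_sq_in_Nats:
  assumes "set w \<subseteq> ring_of_integers K" "length w = n"
  shows "(cmod (det (conj_mat w)))\<^sup>2 \<in> \<nat>"
proof -
  obtain k where "det (conj_mat w) ^ 2 = of_int k"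
    using det_conj_mat_sq_in_Ints[OF assms] by (elim Ints_cases)
  then have "(cmod (det (conj_mat w)))\<^sup>2 = of_nat (nat \<bar>k\<bar>)" by (simp flip: norm_power)
  then show ?thesis by (simp only: of_nat_in_Nats)
qed

text \<open>If some \<open>x \<in> O\<^sub>K\<close> has a non-integral coordinate \<open>c\<^sub>i\<^sub>0\<close>, replacing \<open>w\<^sub>i\<^sub>0\<close> by
  \<open>\<Sum>\<^sub>j frac c\<^sub>j w\<^sub>j\<close> scales the determinant by \<open>frac c\<^sub>i\<^sub>0 \<in> (0, 1)\<close>.\<close>

lemma smaller_integral_q_basis:
  assumes w: "q_basis K w" "set w \<subseteq> ring_of_integers K"
    and x: "x \<in> ring_of_integers K" and i0: "i0 < n" "coord w x i0 \<notin> \<int>"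
  obtains w' where "q_basis K w'" "set w' \<subseteq> ring_of_integers K"
    "cmod (det (conj_mat w')) < cmod (det (conj_mat w))"
proof -
  have len: "length w = n" using q_basis_length[OF w(1)] .
  have wO: "w ! j \<in> ring_of_integers K" if "j < n" for j using w(2) len that nth_mem by blast
  have wK: "set w \<subseteq> K" using w(1) unfolding q_basis_def by blast
  define c where "c = coord w x"
  define r where "r j = frac (c j)" for j
  define x' where "x' = (\<Sum>j<n. of_rat (r j) * w ! j)"
  have "x' = x - (\<Sum>j<n. of_int \<lfloor>c j\<rfloor> * w ! j)"
    using coord_repr[OF w(1)] ring_of_integersD[OF x] len
    by (simp add: x'_def r_def frac_def c_def of_rat_diff algebra_simps sum_subtractf)
  then have "algebraic_int x'"
    using ring_of_integersD[OF x] ring_of_integersD[OF wO]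
    by (auto intro!: algebraic_int_diff algebraic_int_sum algebraic_int_add_mult(2))
  moreover have "x' \<in> K" unfolding x'_def using wK len by (intro lincomb_mem) auto
  ultimately have x'O: "x' \<in> ring_of_integers K" by (simp add: ring_of_integers_def)
  define w' where "w' = w[i0 := x']"
  have w': "set w' \<subseteq> ring_of_integers K" "length w' = n"
    using w(2) x'O set_update_subset_insert[of w i0 x'] len by (auto simp: w'_def)
  have "conj_mat w' = replace_col (conj_mat w) (conj_mat w *\<^sub>v vec n (\<lambda>j. of_rat (r j))) i0"
    using conj_mat_mult_vec[OF wK len, of "\<lambda>j. of_rat (r j)"] len i0(1)
    by (intro eq_matI) (auto simp: replace_col_def w'_def x'_def)
  then have det: "det (conj_mat w') = of_rat (r i0) * det (conj_mat w)"
    using cramer_lemma_mat[OF conj_mat_carrier _ i0(1)] i0(1) by simp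
  have r0: "0 < r i0" "r i0 < 1" using i0(2) by (auto simp: r_def c_def frac_lt_1)
  then have "det (conj_mat w') \<noteq> 0" using det det_conj_mat_nonzero[OF w(1)] by simp
  then have "q_basis K w'"
    using w' by (intro q_basis_if_det_conj_mat_nonzero) (auto simp: ring_of_integers_def)
  moreover have "cmod (det (conj_mat w')) < cmod (det (conj_mat w))"
    using det r0 det_conj_mat_nonzero[OF w(1)] by (simp add: norm_mult cmod_of_rat)
  ultimately show thesis using w' that by blast
qed

lemma integral_basis_if_coord_Ints:
  assumes w: "q_basis K w" "set w \<subseteq> ring_of_integers K"
    and coord: "\<And>x i. x \<in> ring_of_integers K \<Longrightarrow> i < n \<Longrightarrow> coord w x i \<in> \<int>"
  shows "integral_basis K w"
proof -
  have "\<exists>c. x = (\<Sum>i<length w. of_int (c i) * w ! i)" if x: "x \<in> ring_of_integers K" for x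
  proof
    have "x = (\<Sum>i<length w. of_rat (coord w x i) * w ! i)"
      using coord_repr[OF w(1)] ring_of_integersD[OF x] by blast
    also have "\<dots> = (\<Sum>i<length w. of_int \<lfloor>coord w x i\<rfloor> * w ! i)"
    proof (intro sum.cong refl arg_cong2[where f = "(*)"])
      fix i assume "i \<in> {..<length w}"
      then have "coord w x i \<in> \<int>" using coord x q_basis_length[OF w(1)] by auto
      then show "of_rat (coord w x i) = (of_int \<lfloor>coord w x i\<rfloor> :: complex)"
        by (elim Ints_cases) simp
    qed
    finally show "x = (\<Sum>i<length w. of_int \<lfloor>coord w x i\<rfloor> * w ! i)" .
  qed
  then show ?thesis using w unfolding integral_basis_def q_basis_def by blast
qed

lemma integral_basis_exists:
  assumes "q_basis K w" "set w \<subseteq> ring_of_integers K"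
  shows "\<exists>w. integral_basis K w"
  using assms
proof (induction "nat \<lfloor>(cmod (det (conj_mat w)))\<^sup>2\<rfloor>" arbitrary: w rule: less_induct)
  case less
  show ?case
  proof (cases "\<forall>x\<in>ring_of_integers K. \<forall>i<n. coord w x i \<in> \<int>")
    case True
    then show ?thesis using integral_basis_if_coord_Ints less.prems by blast
  next
    case False
    then obtain x i0 where "x \<in> ring_of_integers K" "i0 < n" "coord w x i0 \<notin> \<int>" by blast
    then obtain w' where w': "q_basis K w'" "set w' \<subseteq> ring_of_integers K"
      "cmod (det (conj_mat w')) < cmod (det (conj_mat w))"
      using smaller_integral_q_basis less.prems by blast
    obtain k where "(cmod (det (conj_mat w)))\<^sup>2 = of_nat k"
      using norm_det_conj_mat_sq_in_Nats less.prems q_basis_length by (metis Nats_cases)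
    moreover obtain k' where "(cmod (det (conj_mat w')))\<^sup>2 = of_nat k'"
      using norm_det_conj_mat_sq_in_Nats w'(1,2) q_basis_length by (metis Nats_cases)
    moreover have "(cmod (det (conj_mat w')))\<^sup>2 < (cmod (det (conj_mat w)))\<^sup>2"
      using w'(3) by (simp add: power_strict_mono)
    ultimately have "nat \<lfloor>(cmod (det (conj_mat w')))\<^sup>2\<rfloor> < nat \<lfloor>(cmod (det (conj_mat w)))\<^sup>2\<rfloor>"
      by simp
    then show ?thesis using less.hyps w'(1,2) by blast
  qed
qed

lemma integral_basis_imp_q_basis:
  assumes w: "integral_basis K w" and v: "q_basis K v" "set v \<subseteq> ring_of_integers K"
  shows "q_basis K w"
  unfolding q_basis_iff
proof (intro conjI subsetI)
  have "v ! j \<in> Q.span (set w)" if "j < length v" for j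
  proof -
    have "v ! j \<in> ring_of_integers K" using v(2) that by auto
    then obtain c where "v ! j = (\<Sum>i<length w. of_int (c i) * w ! i)"
      using w unfolding integral_basis_def by blast
    then show ?thesis using Q_span_lincomb[of "\<lambda>i. of_int (c i)" w] by simp
  qed
  then have "Q.span (set v) \<subseteq> Q.span (set w)"
    by (intro Q.span_minimal Q.subspace_span) (auto simp: in_set_conv_nth)
  then show "x \<in> Q.span (set w)" if "x \<in> K" for x
    using v(1) that unfolding q_basis_iff by blast
qed (use w in \<open>auto simp: integral_basis_def ring_of_integers_def\<close>)

lemma det_conj_mat_integral_basis_le:
  assumes w: "integral_basis K w" and v: "q_basis K v" "set v \<subseteq> ring_of_integers K"
  shows "cmod (det (conj_mat w)) \<le> cmod (det (conj_mat v))"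
proof -
  have wb: "q_basis K w" using integral_basis_imp_q_basis[OF assms] .
  have lw: "length w = n" and lv: "length v = n"
    using q_basis_length wb v(1) by auto
  have "\<forall>j\<in>{..<n}. \<exists>c. v ! j = (\<Sum>k<n. of_int (c k) * w ! k)"
  proof
    fix j assume "j \<in> {..<n}"
    then have "v ! j \<in> ring_of_integers K" using v(2) lv by auto
    then show "\<exists>c. v ! j = (\<Sum>k<n. of_int (c k) * w ! k)"
      using w lw unfolding integral_basis_def by auto
  qed
  from bchoice[OF this] obtain a where a: "\<And>j. j < n \<Longrightarrow> v ! j = (\<Sum>k<n. of_int (a j k) * w ! k)"
    by auto
  define A where "A = mat n n (\<lambda>(k, j). a j k)"
  have "map_mat (of_int :: int \<Rightarrow> complex) A = mat n n (\<lambda>(k, j). of_int (a j k))"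
    by (rule eq_matI) (auto simp: A_def)
  then have "conj_mat v = conj_mat w * map_mat of_int A"
    using conj_mat_change_of_basis[of w "\<lambda>j k. of_int (a j k)" v] wb lw a
    by (simp add: q_basis_def)
  then have "det (conj_mat v) = det (conj_mat w) * of_int (det A)"
    by (simp add: det_mult[of _ n _] A_def)
  moreover have "det A \<noteq> 0" using calculation det_conj_mat_nonzero[OF v(1)] by auto
  then have "1 \<le> \<bar>real_of_int (det A)\<bar>" by linarith
  ultimately show ?thesis by (simp add: norm_mult mult_le_cancel_left1)
qed

lemma abs_disc_le_det_conj_mat_sq:
  assumes v: "q_basis K v" "set v \<subseteq> ring_of_integers K"
  shows "\<bar>real_of_rat (disc K)\<bar> \<le> (cmod (det (conj_mat v)))\<^sup>2"
proof -
  define w where "w = (SOME w. integral_basis K w)"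
  have w: "integral_basis K w"
    unfolding w_def using integral_basis_exists[OF v] by (rule someI_ex)
  have wb: "q_basis K w" by (rule integral_basis_imp_q_basis[OF w v])
  have disc: "of_rat (disc K) = det (conj_mat w) ^ 2"
    using det_trace_form_eq_det_conj_mat_sq[of w] wb q_basis_length[OF wb]
    by (simp add: disc_def Let_def w_def[symmetric] q_basis_def)
  have "\<bar>real_of_rat (disc K)\<bar> = cmod (of_rat (disc K))" by (rule cmod_of_rat[symmetric])
  also have "\<dots> = (cmod (det (conj_mat w)))\<^sup>2" by (simp add: disc norm_power)
  also have "\<dots> \<le> (cmod (det (conj_mat v)))\<^sup>2"
    using det_conj_mat_integral_basis_le[OF w v] by (simp add: power_mono)
  finally show ?thesis .
qed

end

lemma powr_inverse_le_if_le_power: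
  fixes x y :: real
  assumes "0 \<le> x" "0 \<le> y" "n > 0" "x \<le> y ^ n"
  shows "x powr (1 / real n) \<le> y"
proof -
  have "x powr (1 / real n) \<le> (y ^ n) powr (1 / real n)"
    using assms by (intro powr_mono2) auto
  also have "\<dots> = y"
    using assms(2,3) by (cases "y = 0") (simp_all add: powr_realpow[symmetric] powr_powr)
  finally show ?thesis .
qed

context galois_enumeration
begin

lemma degree_pos: "n > 0"
proof (rule Nat.gr0I)
  assume "n = 0"
  define b where "b = (SOME b. q_basis K b)"
  have "q_basis K b" unfolding b_def by (rule some_q_basis)
  then have "K \<subseteq> Q.span (set b)" and "b = []"
    using q_basis_length \<open>n = 0\<close> unfolding q_basis_iff by auto
  then have "1 \<in> Q.span {}" using one_mem by auto
  then show False by simp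
qed

lemma sum_conj_comp_right:
  assumes "j < n"
  shows "(\<Sum>i<n. f (\<sigma> i \<circ> \<sigma> j)) = (\<Sum>i<n. f (\<sigma> i))"
proof -
  interpret \<rho>: field_automorphism K "\<sigma> j" by (rule automorphism[OF assms])
  have "inj_on (\<lambda>\<tau>. \<tau> \<circ> \<sigma> j) (gal K)"
  proof (rule inj_onI)
    fix \<tau> \<tau>' assume \<tau>: "\<tau> \<in> gal K" "\<tau>' \<in> gal K" and eq: "\<tau> \<circ> \<sigma> j = \<tau>' \<circ> \<sigma> j"
    show "\<tau> = \<tau>'"
    proof (rule gal_eqI[OF \<tau>])
      fix x assume "x \<in> K"
      then obtain y where "x = \<sigma> j y" using \<rho>.surj by blast
      then show "\<tau> x = \<tau>' x" using fun_cong[OF eq, of y] by simp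
    qed
  qed
  moreover have "(\<lambda>\<tau>. \<tau> \<circ> \<sigma> j) ` gal K \<subseteq> gal K"
    using gal_comp \<rho>.in_gal by blast
  moreover have "finite (gal K)" using enum bij_betw_finite by blast
  ultimately have "bij_betw (\<lambda>\<tau>. \<tau> \<circ> \<sigma> j) (gal K) (gal K)"
    by (simp add: bij_betw_def endo_inj_surj)
  have "(\<Sum>i<n. f (\<sigma> i \<circ> \<sigma> j)) = (\<Sum>\<tau>\<in>gal K. f (\<tau> \<circ> \<sigma> j))"
    by (rule sum.reindex_bij_betw[OF enum])
  also have "\<dots> = (\<Sum>\<tau>\<in>gal K. f \<tau>)"
    by (rule sum.reindex_bij_betw) fact
  also have "\<dots> = (\<Sum>i<n. f (\<sigma> i))"
    by (rule sum.reindex_bij_betw[OF enum, symmetric])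
  finally show ?thesis .
qed

end

theorem proposition2:
  fixes K :: "complex set" and n :: nat and \<sigma> :: "nat \<Rightarrow> complex \<Rightarrow> complex" and \<beta> :: complex
  assumes "number_field K" and "galois K" and "n = degree_Q K"
    and "bij_betw \<sigma> {..<n} (gal K)"
    and "\<beta> \<in> ring_of_integers K"
    and "q_basis K (map (\<lambda>i. \<sigma> i \<beta>) [0..<n])"
  shows "(\<Sum>i<n. (cmod (\<sigma> i \<beta>))\<^sup>2) \<ge> \<bar>real_of_rat (disc K)\<bar> powr (1 / real n)"
proof -
  interpret galois_enumeration K \<sigma> n using assms(1,3,4) by unfold_locales
  let ?b = "map (\<lambda>i. \<sigma> i \<beta>) [0..<n]"
  let ?S = "\<Sum>i<n. (cmod (\<sigma> i \<beta>))\<^sup>2"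
  have "set ?b \<subseteq> ring_of_integers K" using conj_in_ring_of_integers assms(5) by auto
  then have "\<bar>real_of_rat (disc K)\<bar> \<le> (cmod (det (conj_mat ?b)))\<^sup>2"
    using abs_disc_le_det_conj_mat_sq assms(6) by blast
  also have "\<dots> \<le> (\<Prod>j<n. \<Sum>i<n. (cmod (conj_mat ?b $$ (i, j)))\<^sup>2)"
    by (rule hadamard_inequality[OF conj_mat_carrier])
  also have "\<dots> = ?S ^ n"
    using sum_conj_comp_right[where f = "\<lambda>\<tau>. (cmod (\<tau> \<beta>))\<^sup>2"] by simp
  finally show ?thesis
    by (intro powr_inverse_le_if_le_power degree_pos) (auto intro: sum_nonneg)
qed

end
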